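(* $$\zeta(5) = \frac{\pi^5}{294} - \frac{72}{35} \sum_{n=1}^{\infty} \frac{1}{n^5(e^{2\pi n} - 1)} - \frac{2}{35} \sum_{n=1}^{\infty} \frac{1}{n^5(e^{2\pi n} + 1)}.$$
   Context: $\zeta$ denotes the Riemann zeta function, $\zeta(s)=\sum_{n\ge1} n^{-s}$ for $\operatorname{Re} s>1$. *)

theory Defs
  imports "HOL-Analysis.Analysis"
begin

end

theory Submission
  imports Defs "HOL-Real_Asymp.Real_Asymp"
begin

text \<open>
  Write \<open>C(t) = \<Sum>\<^sub>n\<^sub>\<ge>\<^sub>1 coth(tn)/n\<^sup>5\<close>. Since
  \<open>coth y = 1 + 2/(e\<^sup>2\<^sup>y - 1)\<close>, both Lambert-type series of the theorem are linear combinations of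
  \<open>C(\<pi>)\<close>, \<open>C(2\<pi>)\<close> and \<open>\<zeta>(5)\<close>, and the theorem is equivalent to \<open>37 C(\<pi>) - 2 C(2\<pi>) = 5\<pi>\<^sup>5/42\<close>.

  This relation is obtained by summing two absolutely convergent double series in both orders:
  \<open>\<Sum>\<^sub>n\<^sub>,\<^sub>m 1/(n\<^sup>2(n\<^sup>4+4m\<^sup>4))\<close> and \<open>\<Sum>\<^sub>n\<^sub>,\<^sub>m 1/(n\<^sup>4(n\<^sup>2+4m\<^sup>2))\<close>. The inner sums are evaluated with the
  partial fraction expansion of \<open>\<pi> cot \<pi>z\<close> (derived from the digamma reflection formula), evaluated
  at \<open>z = \<i>c\<close> and at \<open>z = c(1+\<i>)\<close> for half-integers \<open>c\<close>, where \<open>cot\<close> becomes \<open>coth\<close> or \<open>tanh\<close>.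
  The outer sums involve \<open>C(\<pi>/2)\<close>, \<open>C(\<pi>)\<close>, \<open>C(2\<pi>)\<close> and \<open>\<zeta>(2)\<close>, \<open>\<zeta>(4)\<close>, \<open>\<zeta>(6)\<close>; the latter two are
  derived here from the Laurent expansion of \<open>x coth x\<close>. Eliminating \<open>C(\<pi>/2)\<close> gives the relation.
\<close>

lemma pi_cot_Digamma:
  fixes z :: complex
  assumes z: "z \<notin> \<int>"
  shows "of_real pi * cot (of_real pi * z) = Digamma (1 - z) - Digamma z"
proof -
  have z1: "z \<notin> \<int>\<^sub>\<le>\<^sub>0" using z nonpos_Ints_subset_Ints by blast
  have z2: "1 - z \<notin> \<int>\<^sub>\<le>\<^sub>0"
  proof
    assume "1 - z \<in> \<int>\<^sub>\<le>\<^sub>0"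
    hence "1 - (1 - z) \<in> \<int>" using nonpos_Ints_subset_Ints by (intro Ints_diff) auto
    thus False using z by simp
  qed
  have "((\<lambda>w. rGamma w * rGamma (1 - w)) has_field_derivative
      (- rGamma z * Digamma z * rGamma (1 - z) + rGamma z * (rGamma (1 - z) * Digamma (1 - z)))) (at z)"
    using z1 z2 by (auto intro!: derivative_eq_intros has_field_derivative_rGamma_no_nonpos_int)
  moreover have "((\<lambda>w. sin (of_real pi * w) / of_real pi) has_field_derivative cos (of_real pi * z)) (at z)"
    by (auto intro!: derivative_eq_intros)
  moreover have "(\<lambda>w::complex. rGamma w * rGamma (1 - w)) = (\<lambda>w. sin (of_real pi * w) / of_real pi)"
    by (rule ext) (rule rGamma_reflection_complex)
  ultimately have "rGamma z * rGamma (1 - z) * (Digamma (1 - z) - Digamma z) = cos (of_real pi * z)"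
    using DERIV_unique by (fastforce simp: algebra_simps)
  hence "sin (of_real pi * z) / of_real pi * (Digamma (1 - z) - Digamma z) = cos (of_real pi * z)"
    by (simp add: rGamma_reflection_complex)
  moreover have "sin (of_real pi * z) \<noteq> 0"
  proof
    assume "sin (of_real pi * z) = 0"
    then obtain n :: int where "of_real pi * z = of_real (of_int n * pi)"
      by (auto simp: sin_eq_0)
    hence "z = of_int n" by (simp add: algebra_simps)
    thus False using z by auto
  qed
  ultimately show ?thesis by (simp add: cot_def field_simps)
qed

lemma pi_cot_partial_fractions:
  fixes z :: complex
  assumes z: "z \<notin> \<int>"
  shows "(\<lambda>k. 2 * z / (z\<^sup>2 - (of_nat (Suc k))\<^sup>2)) sums (of_real pi * cot (of_real pi * z) - 1 / z)"
proof -
  have z0: "z \<noteq> 0" using z by auto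
  have z1: "1 - z \<noteq> 0" using z by (metis Ints_1 eq_iff_diff_eq_0)
  have S1: "(\<lambda>k. inverse (of_nat (Suc k)) - inverse ((1 - z) + of_nat k)) sums (Digamma (1 - z) + euler_mascheroni)"
    using summable_Digamma[OF z1] by (simp add: Digamma_def summable_sums)
  have S2: "(\<lambda>k. inverse (of_nat (Suc k)) - inverse (z + of_nat k)) sums (Digamma z + euler_mascheroni)"
    using summable_Digamma[OF z0] by (simp add: Digamma_def summable_sums)
  have telescope: "(\<lambda>k. inverse (z + of_nat k) - inverse (z + of_nat (Suc k))) sums (inverse (z + of_nat 0) - 0)"
    by (intro telescope_sums'[OF filterlim_compose[OF tendsto_inverse_0]]
              tendsto_add_filterlim_at_infinity[OF tendsto_const] tendsto_of_nat)
  have "(\<lambda>k. inverse (z + of_nat (Suc k)) - inverse ((1 - z) + of_nat k)) sums (Digamma (1 - z) - Digamma z - inverse z)"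
    using sums_diff[OF sums_diff[OF S1 S2] telescope] by (simp add: algebra_simps)
  moreover have "inverse (z + of_nat (Suc k)) - inverse ((1 - z) + of_nat k) = 2 * z / (z\<^sup>2 - (of_nat (Suc k))\<^sup>2)" for k
  proof -
    have a: "z + of_nat (Suc k) \<noteq> 0"
      using z by (metis Ints_minus Ints_of_nat add.commute add_eq_0_iff minus_minus)
    have b: "(1 - z) + of_nat k \<noteq> 0"
    proof
      assume "(1 - z) + of_nat k = 0"
      hence "z = of_nat (Suc k)" by (simp add: algebra_simps)
      thus False using z by (metis Ints_of_nat)
    qed
    have quotient: "inverse (z + of_nat (Suc k)) - inverse ((1 - z) + of_nat k) =
       (((1 - z) + of_nat k) - (z + of_nat (Suc k))) / ((z + of_nat (Suc k)) * ((1 - z) + of_nat k))"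
      using a b by (simp add: field_simps)
    have numerator: "((1 - z) + of_nat k) - (z + of_nat (Suc k)) = - (2 * z)" by simp
    have denominator: "z\<^sup>2 - (of_nat (Suc k))\<^sup>2 = - ((z + of_nat (Suc k)) * ((1 - z) + of_nat k))"
      by (simp add: algebra_simps power2_eq_square)
    show ?thesis unfolding quotient numerator denominator by simp
  qed
  ultimately show ?thesis unfolding pi_cot_Digamma[OF z] by (simp add: divide_inverse)
qed

text \<open>The value of \<open>\<Sum>\<^sub>k\<^sub>\<ge>\<^sub>1 1/(k\<^sup>2 - z\<^sup>2)\<close>, read off from the cotangent expansion.\<close>
definition recip_square_diff_sum :: "complex \<Rightarrow> complex" where
  "recip_square_diff_sum z = (1 - of_real pi * z * cot (of_real pi * z)) / (2 * z\<^sup>2)"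

lemma recip_square_diff_sums:
  fixes z :: complex
  assumes z: "z \<notin> \<int>"
  shows "(\<lambda>k. 1 / ((of_nat (Suc k))\<^sup>2 - z\<^sup>2)) sums recip_square_diff_sum z"
proof -
  have z0: "z \<noteq> 0" using z by auto
  have "(\<lambda>k. 2 * z / (z\<^sup>2 - (of_nat (Suc k))\<^sup>2) * (- 1 / (2 * z))) sums
        ((of_real pi * cot (of_real pi * z) - 1 / z) * (- 1 / (2 * z)))"
    by (rule sums_mult2[OF pi_cot_partial_fractions[OF z]])
  moreover have "2 * z / (z\<^sup>2 - (of_nat (Suc k))\<^sup>2) * (- 1 / (2 * z)) = 1 / ((of_nat (Suc k))\<^sup>2 - z\<^sup>2)" for k
    using z0 by (cases "z\<^sup>2 = (of_nat (Suc k))\<^sup>2") (simp_all add: field_simps)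
  moreover have "(of_real pi * cot (of_real pi * z) - 1 / z) * (- 1 / (2 * z)) = recip_square_diff_sum z"
    using z0 by (simp add: recip_square_diff_sum_def field_simps power2_eq_square)
  ultimately show ?thesis by simp
qed

lemma recip_diff_sum_identities:
  fixes a b :: "'a :: field_char_0"
  assumes "a - b \<noteq> 0" "a + b \<noteq> 0" "b \<noteq> 0"
  shows "(1 / (a - b) - 1 / (a + b)) / (2 * b) = 1 / ((a - b) * (a + b))"
    and "(1 / (a - b) + 1 / (a + b)) / 2 = a / ((a - b) * (a + b))"
proof -
  have P: "(a - b) * (a + b) \<noteq> 0" using assms by simp
  have "1 / (a - b) - 1 / (a + b) = ((a + b) - (a - b)) / ((a - b) * (a + b))"
    using assms by (simp add: diff_frac_eq)
  also have "(a + b) - (a - b) = 2 * b" by simp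
  finally show "(1 / (a - b) - 1 / (a + b)) / (2 * b) = 1 / ((a - b) * (a + b))"
    using assms P by simp
  have "1 / (a - b) + 1 / (a + b) = ((a + b) + (a - b)) / ((a - b) * (a + b))"
    using assms by (simp add: add_frac_eq)
  also have "(a + b) + (a - b) = 2 * a" by simp
  finally show "(1 / (a - b) + 1 / (a + b)) / 2 = a / ((a - b) * (a + b))"
    using assms P by simp
qed

text \<open>Series over quartic denominators \<open>k\<^sup>4 - w\<^sup>4\<close>, by splitting into \<open>k\<^sup>2 - w\<^sup>2\<close> and \<open>k\<^sup>2 - (\<i>w)\<^sup>2\<close>.\<close>
lemma quartic_sums_complex:
  fixes w :: complex
  assumes w: "w \<notin> \<int>" and iw: "\<i> * w \<notin> \<int>"
  shows "(\<lambda>k. 1 / ((of_nat (Suc k))^4 - w^4)) sums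
           ((recip_square_diff_sum w - recip_square_diff_sum (\<i> * w)) / (2 * w\<^sup>2))"
    and "(\<lambda>k. (of_nat (Suc k))\<^sup>2 / ((of_nat (Suc k))^4 - w^4)) sums
           ((recip_square_diff_sum w + recip_square_diff_sum (\<i> * w)) / 2)"
proof -
  have w0: "w \<noteq> 0" using w by auto
  have iw2: "(\<i> * w)\<^sup>2 = - w\<^sup>2" by (simp add: power_mult_distrib)
  have nonzero: "(of_nat (Suc k))\<^sup>2 - v\<^sup>2 \<noteq> (0::complex)" if "v \<notin> \<int>" for v k
  proof
    assume "(of_nat (Suc k))\<^sup>2 - v\<^sup>2 = (0::complex)"
    hence "(v - of_nat (Suc k)) * (v + of_nat (Suc k)) = 0" by (simp add: algebra_simps power2_eq_square)
    hence "v = of_nat (Suc k) \<or> v = - of_nat (Suc k)" by (auto simp: add_eq_0_iff2)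
    thus False using that by (metis Ints_minus Ints_of_nat)
  qed
  have ne1: "(of_nat (Suc k))\<^sup>2 - w\<^sup>2 \<noteq> (0::complex)" for k using nonzero[OF w] .
  have ne2: "(of_nat (Suc k))\<^sup>2 + w\<^sup>2 \<noteq> (0::complex)" for k using nonzero[OF iw] by (simp add: iw2)
  have fac: "(of_nat (Suc k))^4 - w^4 = ((of_nat (Suc k))\<^sup>2 - w\<^sup>2) * ((of_nat (Suc k))\<^sup>2 + w\<^sup>2)" for k :: nat
    by (simp add: algebra_simps power2_eq_square power4_eq_xxxx)
  have A: "(\<lambda>k. 1 / ((of_nat (Suc k))\<^sup>2 - w\<^sup>2)) sums recip_square_diff_sum w"
    by (rule recip_square_diff_sums[OF w])
  have B: "(\<lambda>k. 1 / ((of_nat (Suc k))\<^sup>2 + w\<^sup>2)) sums recip_square_diff_sum (\<i> * w)"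
    using recip_square_diff_sums[OF iw] unfolding iw2 by simp
  have "(\<lambda>k. (1 / ((of_nat (Suc k))\<^sup>2 - w\<^sup>2) - 1 / ((of_nat (Suc k))\<^sup>2 + w\<^sup>2)) / (2 * w\<^sup>2)) sums
     ((recip_square_diff_sum w - recip_square_diff_sum (\<i> * w)) / (2 * w\<^sup>2))"
    by (intro sums_divide sums_diff A B)
  thus "(\<lambda>k. 1 / ((of_nat (Suc k))^4 - w^4)) sums
           ((recip_square_diff_sum w - recip_square_diff_sum (\<i> * w)) / (2 * w\<^sup>2))"
    unfolding fac using ne1 ne2 w0 by (subst (asm) recip_diff_sum_identities(1)) auto
  have "(\<lambda>k. (1 / ((of_nat (Suc k))\<^sup>2 - w\<^sup>2) + 1 / ((of_nat (Suc k))\<^sup>2 + w\<^sup>2)) / 2) sums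
     ((recip_square_diff_sum w + recip_square_diff_sum (\<i> * w)) / 2)"
    by (intro sums_divide sums_add A B)
  thus "(\<lambda>k. (of_nat (Suc k))\<^sup>2 / ((of_nat (Suc k))^4 - w^4)) sums
           ((recip_square_diff_sum w + recip_square_diff_sum (\<i> * w)) / 2)"
    unfolding fac using ne1 ne2 w0 by (subst (asm) recip_diff_sum_identities(2)) auto
qed

definition coth :: "real \<Rightarrow> real" where
  "coth y = cosh y / sinh y"

lemma cos_i_times_of_real: "cos (\<i> * complex_of_real y) = of_real (cosh y)"
  by (simp add: cos_i_times cosh_def exp_of_real exp_minus field_simps)

lemma sin_i_times_of_real: "sin (\<i> * complex_of_real y) = \<i> * of_real (sinh y)"
  by (simp add: sin_i_times sinh_def exp_of_real exp_minus field_simps)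

lemma cot_at_sin_zero:
  fixes a y :: real
  assumes "sin a = 0"
  shows "cot (of_real a + \<i> * of_real y) = - \<i> * of_real (coth y)"
proof -
  have "cos a = 1 \<or> cos a = -1"
    using assms sin_cos_squared_add[of a] by (simp add: power2_eq_1_iff)
  moreover have "sin (of_real a + \<i> * of_real y) = of_real (cos a) * (\<i> * of_real (sinh y))"
    by (simp add: sin_add sin_of_real cos_of_real assms cos_i_times_of_real sin_i_times_of_real)
  moreover have "cos (of_real a + \<i> * of_real y) = of_real (cos a) * of_real (cosh y)"
    by (simp add: cos_add sin_of_real cos_of_real assms cos_i_times_of_real sin_i_times_of_real)
  ultimately show ?thesis unfolding cot_def coth_def
    by (cases "sinh y = 0") (auto simp: field_simps)
qed

lemma cot_at_cos_zero:
  fixes a y :: real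
  assumes "cos a = 0"
  shows "cot (of_real a + \<i> * of_real y) = - \<i> * of_real (tanh y)"
proof -
  have "sin a = 1 \<or> sin a = -1"
    using assms sin_cos_squared_add[of a] by (simp add: power2_eq_1_iff)
  moreover have "sin (of_real a + \<i> * of_real y) = of_real (sin a) * of_real (cosh y)"
    by (simp add: sin_add sin_of_real cos_of_real assms cos_i_times_of_real sin_i_times_of_real)
  moreover have "cos (of_real a + \<i> * of_real y) = - of_real (sin a) * (\<i> * of_real (sinh y))"
    by (simp add: cos_add sin_of_real cos_of_real assms cos_i_times_of_real sin_i_times_of_real)
  moreover have "cosh y \<noteq> 0" by (metis cosh_real_pos less_irrefl)
  ultimately show ?thesis unfolding cot_def tanh_def by (auto simp: field_simps)
qed

lemma not_Ints_if_Im_nonzero: "Im z \<noteq> 0 \<Longrightarrow> z \<notin> \<int>"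
  by (auto elim!: Ints_cases)

text \<open>The classical series \<open>\<Sum>\<^sub>k\<^sub>\<ge>\<^sub>1 1/(k\<^sup>2 + c\<^sup>2)\<close> (the case \<open>z = \<i>c\<close> of the cotangent expansion).\<close>
lemma inverse_square_plus_sums:
  fixes c :: real
  assumes c: "c > 0"
  shows "(\<lambda>k. 1 / ((real (Suc k))\<^sup>2 + c\<^sup>2)) sums ((pi * c * coth (pi * c) - 1) / (2 * c\<^sup>2))"
proof -
  define z where "z = \<i> * complex_of_real c"
  have z: "z \<notin> \<int>" using c by (intro not_Ints_if_Im_nonzero) (simp add: z_def)
  have z2: "z\<^sup>2 = - of_real (c\<^sup>2)" by (simp add: z_def power_mult_distrib)
  have "cot (of_real pi * z) = - \<i> * of_real (coth (pi * c))"
    using cot_at_sin_zero[of 0 "pi * c"] by (simp add: z_def algebra_simps)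
  hence "of_real pi * z * cot (of_real pi * z) = of_real (pi * c * coth (pi * c))"
    by (simp add: z_def algebra_simps)
  hence "recip_square_diff_sum z = of_real ((1 - pi * c * coth (pi * c)) / (- 2 * c\<^sup>2))"
    unfolding recip_square_diff_sum_def z2 by simp
  also have "(1 - pi * c * coth (pi * c)) / (- 2 * c\<^sup>2) = (pi * c * coth (pi * c) - 1) / (2 * c\<^sup>2)"
    using c by (simp add: field_simps)
  finally have closed_form: "recip_square_diff_sum z = of_real ((pi * c * coth (pi * c) - 1) / (2 * c\<^sup>2))" .
  have terms: "1 / ((of_nat (Suc k))\<^sup>2 - z\<^sup>2) = of_real (1 / ((real (Suc k))\<^sup>2 + c\<^sup>2))" for k
    unfolding z2 by simp
  from recip_square_diff_sums[OF z] show ?thesis unfolding terms closed_form sums_of_real_iff .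
qed

text \<open>
  The series \<open>\<Sum> 1/(k\<^sup>4 + 4c\<^sup>4)\<close> and \<open>\<Sum> k\<^sup>2/(k\<^sup>4 + 4c\<^sup>4)\<close>: here \<open>-4c\<^sup>4 = w\<^sup>4\<close> with \<open>w = c(1+\<i>)\<close>.
  They have a closed form whenever \<open>cot \<pi>w\<close> and \<open>cot \<pi>\<i>w\<close> take the same purely imaginary value
  \<open>-\<i>K\<close>, which happens when \<open>2c\<close> is an integer.
\<close>
lemma quartic_sums_real:
  fixes c K :: real
  assumes c: "c > 0"
    and cot1: "cot (of_real (pi * c) + \<i> * of_real (pi * c)) = - \<i> * of_real K"
    and cot2: "cot (of_real (- (pi * c)) + \<i> * of_real (pi * c)) = - \<i> * of_real K"
  shows "(\<lambda>k. 1 / ((real (Suc k))^4 + 4 * c^4)) sums ((pi * c * K - 1) / (8 * c^4))"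
    and "(\<lambda>k. (real (Suc k))\<^sup>2 / ((real (Suc k))^4 + 4 * c^4)) sums (pi * K / (4 * c))"
proof -
  define w where "w = of_real c * (1 + \<i>)"
  have w: "w \<notin> \<int>" using c by (intro not_Ints_if_Im_nonzero) (simp add: w_def)
  have iw: "\<i> * w \<notin> \<int>" using c by (intro not_Ints_if_Im_nonzero) (simp add: w_def)
  have w4: "w^4 = - of_real (4 * c^4)"
    by (simp add: w_def power_mult_distrib power4_eq_xxxx algebra_simps)
  have w2: "w\<^sup>2 = 2 * \<i> * of_real (c\<^sup>2)"
    by (simp add: w_def power_mult_distrib power2_eq_square algebra_simps)
  have iw2: "(\<i> * w)\<^sup>2 = - (2 * \<i> * of_real (c\<^sup>2))"
    by (simp add: w2 power_mult_distrib)
  have c0: "complex_of_real c \<noteq> 0" using c by simp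
  have "of_real pi * w = of_real (pi * c) + \<i> * of_real (pi * c)"
    by (simp add: w_def algebra_simps)
  hence Gw: "recip_square_diff_sum w = (1 + \<i> * of_real pi * w * of_real K) / (4 * \<i> * of_real (c\<^sup>2))"
    unfolding recip_square_diff_sum_def w2 using cot1 by (simp add: w_def algebra_simps)
  have "of_real pi * (\<i> * w) = of_real (- (pi * c)) + \<i> * of_real (pi * c)"
    by (simp add: w_def complex_eq_iff)
  hence Giw: "recip_square_diff_sum (\<i> * w) = (1 - of_real pi * w * of_real K) / (- (4 * \<i> * of_real (c\<^sup>2)))"
    unfolding recip_square_diff_sum_def iw2 using cot2 by (simp add: w_def algebra_simps)
  have E1: "(recip_square_diff_sum w - recip_square_diff_sum (\<i> * w)) / (2 * w\<^sup>2)
      = of_real ((pi * c * K - 1) / (8 * c^4))"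
  proof -
    have numerator: "(1 + \<i> * of_real pi * w * of_real K) + (1 - of_real pi * w * of_real K) =
        of_real (2 - 2 * pi * c * K)"
      by (simp add: w_def algebra_simps)
    have "recip_square_diff_sum w - recip_square_diff_sum (\<i> * w) =
        ((1 + \<i> * of_real pi * w * of_real K) + (1 - of_real pi * w * of_real K)) / (4 * \<i> * of_real (c\<^sup>2))"
      unfolding Gw Giw by (simp add: diff_divide_distrib add_divide_distrib)
    hence "(recip_square_diff_sum w - recip_square_diff_sum (\<i> * w)) / (2 * w\<^sup>2)
        = of_real (2 - 2 * pi * c * K) / ((4 * \<i> * of_real (c\<^sup>2)) * (4 * \<i> * of_real (c\<^sup>2)))"
      unfolding w2 numerator by (simp add: mult.assoc)
    also have "(4 * \<i> * of_real (c\<^sup>2)) * (4 * \<i> * of_real (c\<^sup>2)) = of_real (- 16 * c^4)"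
      by (simp add: algebra_simps power2_eq_square power4_eq_xxxx)
    also have "(of_real (2 - 2 * pi * c * K) :: complex) / of_real (- 16 * c^4) = of_real ((pi * c * K - 1) / (8 * c^4))"
      unfolding of_real_divide[symmetric] using c by (simp add: field_simps)
    finally show ?thesis .
  qed
  have E2: "(recip_square_diff_sum w + recip_square_diff_sum (\<i> * w)) / 2 = of_real (pi * K / (4 * c))"
    unfolding Gw Giw using c0 by (simp add: w_def field_simps power2_eq_square complex_eq_iff)
  have T1: "1 / ((of_nat (Suc k))^4 - w^4) = of_real (1 / ((real (Suc k))^4 + 4 * c^4))" for k
    unfolding w4 by simp
  have T2: "(of_nat (Suc k))\<^sup>2 / ((of_nat (Suc k))^4 - w^4) =
      of_real ((real (Suc k))\<^sup>2 / ((real (Suc k))^4 + 4 * c^4))" for k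
    unfolding w4 by simp
  from quartic_sums_complex(1)[OF w iw]
  show "(\<lambda>k. 1 / ((real (Suc k))^4 + 4 * c^4)) sums ((pi * c * K - 1) / (8 * c^4))"
    unfolding T1 E1 sums_of_real_iff .
  from quartic_sums_complex(2)[OF w iw]
  show "(\<lambda>k. (real (Suc k))\<^sup>2 / ((real (Suc k))^4 + 4 * c^4)) sums (pi * K / (4 * c))"
    unfolding T2 E2 sums_of_real_iff .
qed

lemma sin_half_pi_even: "even n \<Longrightarrow> sin (pi * real n / 2) = 0"
  by (elim evenE) (simp add: sin_npi mult.commute)

lemma cos_half_pi_odd: "odd n \<Longrightarrow> cos (pi * real n / 2) = 0"
proof (elim oddE)
  fix j assume "n = 2 * j + 1"
  hence e: "pi * real n / 2 = real j * pi + pi / 2" by (simp add: field_simps)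
  show "cos (pi * real n / 2) = 0" unfolding e by (simp add: cos_add sin_npi)
qed

text \<open>The value of \<open>i cot (\<pi>n(1+\<i>)/2)\<close>: \<open>coth\<close> or \<open>tanh\<close> of \<open>\<pi>n/2\<close> according to the parity of \<open>n\<close>.\<close>
definition parity_coth :: "nat \<Rightarrow> real" where
  "parity_coth n = (if even n then coth (pi * real n / 2) else tanh (pi * real n / 2))"

text \<open>Row sums of the first double series: \<open>\<Sum>\<^sub>m 1/(n\<^sup>4 + 4m\<^sup>4)\<close> (quartic series with \<open>c = n/2\<close>).\<close>
lemma inverse_quartic_sums:
  fixes n :: nat
  assumes n: "n > 0"
  shows "(\<lambda>k. 1 / ((real n)^4 + 4 * (real (Suc k))^4)) sums
           ((pi * real n * parity_coth n - 2) / (4 * (real n)^4))"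
proof -
  define c where "c = real n / 2"
  have c: "c > 0" using n by (simp add: c_def)
  have y: "pi * c = pi * real n / 2" by (simp add: c_def)
  have cot_value: "cot (of_real a + \<i> * of_real (pi * c)) = - \<i> * of_real (parity_coth n)"
    if "sin a = 0 \<longleftrightarrow> sin (pi * real n / 2) = 0" "cos a = 0 \<longleftrightarrow> cos (pi * real n / 2) = 0" for a
  proof (cases "even n")
    case True
    hence "sin a = 0" using that sin_half_pi_even by simp
    from cot_at_sin_zero[OF this, of "pi * real n / 2"] show ?thesis
      unfolding y parity_coth_def using True by simp
  next
    case False
    hence "cos a = 0" using that cos_half_pi_odd by simp
    from cot_at_cos_zero[OF this, of "pi * real n / 2"] show ?thesis
      unfolding y parity_coth_def using False by simp
  qed
  have sums: "(\<lambda>k. 1 / ((real (Suc k))^4 + 4 * c^4) / 4) sums ((pi * c * parity_coth n - 1) / (8 * c^4) / 4)"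
    by (intro sums_divide quartic_sums_real(1)[OF c] cot_value) (simp_all add: y)
  have terms: "1 / ((real (Suc k))^4 + 4 * c^4) / 4 = 1 / ((real n)^4 + 4 * (real (Suc k))^4)" for k
  proof -
    have "(real (Suc k))^4 + 4 * c^4 = ((real n)^4 + 4 * (real (Suc k))^4) / 4"
      by (simp add: c_def field_simps)
    thus ?thesis by simp
  qed
  have closed_form: "(pi * c * parity_coth n - 1) / (8 * c^4) / 4 = (pi * real n * parity_coth n - 2) / (4 * (real n)^4)"
    using n by (simp add: c_def field_simps)
  show ?thesis using sums unfolding terms closed_form .
qed

text \<open>Column sums of the first double series: \<open>\<Sum>\<^sub>k k\<^sup>2/(k\<^sup>4 + 4m\<^sup>4)\<close> (quartic series with \<open>c = m\<close>).\<close>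
lemma square_over_quartic_sums:
  fixes m :: nat
  assumes m: "m > 0"
  shows "(\<lambda>k. (real (Suc k))\<^sup>2 / ((real (Suc k))^4 + 4 * (real m)^4)) sums (pi * coth (pi * real m) / (4 * real m))"
proof (rule quartic_sums_real(2))
  have sin_zero: "sin (pi * real m) = 0" by (simp add: sin_npi mult.commute)
  show "cot (of_real (pi * real m) + \<i> * of_real (pi * real m)) = - \<i> * of_real (coth (pi * real m))"
    and "cot (of_real (- (pi * real m)) + \<i> * of_real (pi * real m)) = - \<i> * of_real (coth (pi * real m))"
    by (intro cot_at_sin_zero; simp add: sin_zero)+
qed (use m in simp)

lemma summable_inverse_power_Suc: "p \<ge> 2 \<Longrightarrow> summable (\<lambda>k. 1 / (real (Suc k))^p)"
  using inverse_power_summable[of p, where 'a=real] summable_Suc_iff[of "\<lambda>n. inverse (real n ^ p)"]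
  by (simp add: inverse_eq_divide)

lemma inverse_squares_Suc_sums: "(\<lambda>k. 1 / (real (Suc k))\<^sup>2) sums (pi\<^sup>2 / 6)"
  using inverse_squares_sums by (simp add: add.commute)

text \<open>
  If \<open>F(c) = \<Sum>\<^sub>k 1/(k\<^sup>p(k\<^sup>2+c\<^sup>2))\<close> for \<open>c > 0\<close>, then \<open>F(c) \<rightarrow> \<zeta>(p+2)\<close> as \<open>c \<rightarrow> 0\<^sup>+\<close>, since the
  defect \<open>c\<^sup>2 \<Sum>\<^sub>k 1/(k\<^sup>p\<^sup>+\<^sup>2(k\<^sup>2+c\<^sup>2))\<close> is bounded by \<open>c\<^sup>2 \<zeta>(p+4)\<close>. So a closed form of \<open>F\<close> with a
  known limit evaluates \<open>\<zeta>(p+2)\<close>.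
\<close>
lemma inverse_power_sums_from_limit:
  fixes F :: "real \<Rightarrow> real"
  assumes F: "\<And>c. c > 0 \<Longrightarrow> (\<lambda>k. 1 / ((real (Suc k))^p * ((real (Suc k))\<^sup>2 + c\<^sup>2))) sums F c"
    and limit: "(F \<longlongrightarrow> L) (at_right 0)"
  shows "(\<lambda>k. 1 / (real (Suc k))^(p + 2)) sums L"
proof -
  define u where "u k = 1 / (real (Suc k))^(p + 2)" for k
  define w where "w k = 1 / (real (Suc k))^(p + 4)" for k
  define v where "v c k = 1 / ((real (Suc k))^(p + 2) * ((real (Suc k))\<^sup>2 + c\<^sup>2))" for c k
  have su: "summable u" unfolding u_def by (rule summable_inverse_power_Suc) simp
  have sw: "summable w" unfolding w_def by (rule summable_inverse_power_Suc) simp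
  have v_bounds: "0 \<le> v c k \<and> v c k \<le> w k" for c k
  proof -
    have "p + 4 = (p + 2) + 2" by simp
    hence "(real (Suc k))^(p + 4) = (real (Suc k))^(p + 2) * (real (Suc k))\<^sup>2"
      by (simp only: power_add)
    also have "\<dots> \<le> (real (Suc k))^(p + 2) * ((real (Suc k))\<^sup>2 + c\<^sup>2)"
      by (intro mult_left_mono) auto
    finally show ?thesis unfolding v_def w_def
      by (auto intro!: divide_left_mono mult_pos_pos add_pos_nonneg)
  qed
  have sv: "summable (v c)" for c
    by (rule summable_comparison_test[OF _ sw]) (use v_bounds in auto)
  have F_eq: "F c = suminf u - c\<^sup>2 * suminf (v c)" if "c > 0" for c
  proof -
    have split: "1 / (X * (N\<^sup>2 + c\<^sup>2)) = 1 / (X * N\<^sup>2) - c\<^sup>2 * (1 / (X * N\<^sup>2 * (N\<^sup>2 + c\<^sup>2)))"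
      if "X > 0" "N > 0" for X N :: real
    proof -
      have "N\<^sup>2 + c\<^sup>2 > 0" using that by (intro add_pos_nonneg) auto
      thus ?thesis using that by (simp add: divide_simps)
    qed
    have "1 / ((real (Suc k))^p * ((real (Suc k))\<^sup>2 + c\<^sup>2)) = u k - c\<^sup>2 * v c k" for k
      unfolding u_def v_def power_add by (rule split) auto
    hence "(\<lambda>k. u k - c\<^sup>2 * v c k) sums F c" using F[OF that] by simp
    moreover have "(\<lambda>k. u k - c\<^sup>2 * v c k) sums (suminf u - c\<^sup>2 * suminf (v c))"
      by (intro sums_diff sums_mult summable_sums su sv)
    ultimately show ?thesis by (rule sums_unique2)
  qed
  have defect: "((\<lambda>c. c\<^sup>2 * suminf (v c)) \<longlongrightarrow> 0) (at_right 0)"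
  proof (rule tendsto_sandwich[of "\<lambda>_. 0" _ _ "\<lambda>c. c\<^sup>2 * suminf w"])
    have "0 \<le> suminf (v c) \<and> suminf (v c) \<le> suminf w" for c
      using v_bounds sv sw by (auto intro!: suminf_nonneg suminf_le)
    thus "\<forall>\<^sub>F c in at_right 0. 0 \<le> c\<^sup>2 * suminf (v c)"
      and "\<forall>\<^sub>F c in at_right 0. c\<^sup>2 * suminf (v c) \<le> c\<^sup>2 * suminf w"
      by (auto intro!: always_eventually mult_left_mono)
    have "((\<lambda>c::real. c\<^sup>2 * suminf w) \<longlongrightarrow> 0\<^sup>2 * suminf w) (at_right 0)"
      by (intro tendsto_intros)
    thus "((\<lambda>c::real. c\<^sup>2 * suminf w) \<longlongrightarrow> 0) (at_right 0)" by simp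
  qed simp
  have "((\<lambda>c. suminf u - c\<^sup>2 * suminf (v c)) \<longlongrightarrow> suminf u - 0) (at_right 0)"
    by (intro tendsto_intros defect)
  moreover have "\<forall>\<^sub>F c in at_right 0. suminf u - c\<^sup>2 * suminf (v c) = F c"
    using eventually_at_right_less[of 0] by eventually_elim (simp add: F_eq)
  ultimately have "(F \<longlongrightarrow> suminf u) (at_right 0)" by (simp add: tendsto_cong)
  with limit have "suminf u = L" by (intro tendsto_unique) simp_all
  with summable_sums[OF su] show ?thesis unfolding u_def by simp
qed

text \<open>
  The normalised remainder of the expansion \<open>x coth x = 1 + x\<^sup>2/3 - x\<^sup>4/45 + 2x\<^sup>6/945 - \<dots>\<close>;
  it tends to \<open>1/90\<close>, and its next coefficient is \<open>-1/945\<close>.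
\<close>
definition coth_remainder :: "real \<Rightarrow> real" where
  "coth_remainder x = (1/6 - (x * coth x - 1) / (2 * x\<^sup>2)) / x\<^sup>2"

lemma coth_remainder_limit: "(coth_remainder \<longlongrightarrow> 1/90) (at_right 0)"
  unfolding coth_remainder_def coth_def by real_asymp

lemma coth_remainder_next_limit:
  "((\<lambda>x. (1/90 - coth_remainder x) / x\<^sup>2) \<longlongrightarrow> 1/945) (at_right 0)"
  unfolding coth_remainder_def coth_def by real_asymp

lemma filterlim_pi_times_at_right_0: "filterlim (\<lambda>c::real. pi * c) (at_right 0) (at_right 0)"
  by real_asymp

text \<open>\<open>\<Sum>\<^sub>k 1/(k\<^sup>2(k\<^sup>2+c\<^sup>2))\<close>, by partial fractions against \<open>\<zeta>(2)\<close> and \<open>\<Sum> 1/(k\<^sup>2+c\<^sup>2)\<close>.\<close>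
lemma inverse_square_weighted_sums:
  fixes c :: real
  assumes c: "c > 0"
  shows "(\<lambda>k. 1 / ((real (Suc k))\<^sup>2 * ((real (Suc k))\<^sup>2 + c\<^sup>2))) sums (pi^4 * coth_remainder (pi * c))"
proof -
  have "(\<lambda>k. (1 / (real (Suc k))\<^sup>2 - 1 / ((real (Suc k))\<^sup>2 + c\<^sup>2)) / c\<^sup>2) sums
      ((pi\<^sup>2 / 6 - (pi * c * coth (pi * c) - 1) / (2 * c\<^sup>2)) / c\<^sup>2)"
    by (intro sums_divide sums_diff inverse_squares_Suc_sums inverse_square_plus_sums c)
  moreover have "(1 / N\<^sup>2 - 1 / (N\<^sup>2 + c\<^sup>2)) / c\<^sup>2 = 1 / (N\<^sup>2 * (N\<^sup>2 + c\<^sup>2))" if "N > 0" for N :: real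
  proof -
    have "N\<^sup>2 + c\<^sup>2 > 0" "c \<noteq> 0" using that c by (auto intro!: add_pos_pos)
    thus ?thesis using that by (simp add: divide_simps)
  qed
  moreover have "(pi\<^sup>2 / 6 - (pi * c * coth (pi * c) - 1) / (2 * c\<^sup>2)) / c\<^sup>2 = pi^4 * coth_remainder (pi * c)"
    using c by (simp add: coth_remainder_def field_simps power2_eq_square power4_eq_xxxx)
  ultimately show ?thesis by simp
qed

theorem inverse_fourth_powers_sums: "(\<lambda>k. 1 / (real (Suc k))^4) sums (pi^4 / 90)"
proof -
  have "((\<lambda>c. pi^4 * coth_remainder (pi * c)) \<longlongrightarrow> pi^4 * (1/90)) (at_right 0)"
    by (intro tendsto_intros filterlim_compose[OF coth_remainder_limit filterlim_pi_times_at_right_0])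
  from inverse_power_sums_from_limit[of 2, OF inverse_square_weighted_sums this] show ?thesis by simp
qed

text \<open>\<open>\<Sum>\<^sub>k 1/(k\<^sup>4(k\<^sup>2+c\<^sup>2))\<close>, by partial fractions against \<open>\<zeta>(4)\<close> and the previous series.\<close>
lemma inverse_fourth_weighted_sums:
  fixes c :: real
  assumes c: "c > 0"
  shows "(\<lambda>k. 1 / ((real (Suc k))^4 * ((real (Suc k))\<^sup>2 + c\<^sup>2))) sums
           (pi^6 * ((1/90 - coth_remainder (pi * c)) / (pi * c)\<^sup>2))"
proof -
  have "(\<lambda>k. (1 / (real (Suc k))^4 - 1 / ((real (Suc k))\<^sup>2 * ((real (Suc k))\<^sup>2 + c\<^sup>2))) / c\<^sup>2) sums
      ((pi^4 / 90 - pi^4 * coth_remainder (pi * c)) / c\<^sup>2)"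
    by (intro sums_divide sums_diff inverse_fourth_powers_sums inverse_square_weighted_sums c)
  moreover have "(1 / N^4 - 1 / (N\<^sup>2 * (N\<^sup>2 + c\<^sup>2))) / c\<^sup>2 = 1 / (N^4 * (N\<^sup>2 + c\<^sup>2))" if "N > 0" for N :: real
  proof -
    have "N\<^sup>2 + c\<^sup>2 > 0" "c \<noteq> 0" using that c by (auto intro!: add_pos_pos)
    thus ?thesis using that by (simp add: divide_simps) (simp add: algebra_simps eval_nat_numeral)
  qed
  moreover have "(pi^4 / 90 - pi^4 * coth_remainder (pi * c)) / c\<^sup>2 =
      pi^6 * ((1/90 - coth_remainder (pi * c)) / (pi * c)\<^sup>2)"
    using c by (simp add: field_simps power2_eq_square eval_nat_numeral)
  ultimately show ?thesis by simp
qed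

theorem inverse_sixth_powers_sums: "(\<lambda>k. 1 / (real (Suc k))^6) sums (pi^6 / 945)"
proof -
  have "((\<lambda>c. pi^6 * ((1/90 - coth_remainder (pi * c)) / (pi * c)\<^sup>2)) \<longlongrightarrow> pi^6 * (1/945)) (at_right 0)"
    by (intro tendsto_intros filterlim_compose[OF coth_remainder_next_limit filterlim_pi_times_at_right_0])
  from inverse_power_sums_from_limit[of 4, OF inverse_fourth_weighted_sums this] show ?thesis by simp
qed

lemma coth_exp: "y > 0 \<Longrightarrow> coth y = 1 + 2 / (exp (2 * y) - 1)"
proof -
  assume y: "y > 0"
  have e: "exp (2 * y) = exp y * exp y" by (simp add: exp_add[symmetric])
  have p: "exp y > 1" using y by simp
  hence "exp y * exp y - 1 \<noteq> 0" using less_1_mult[OF p p] by simp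
  thus ?thesis unfolding coth_def cosh_def sinh_def e exp_minus using p
    by (simp add: field_simps)
qed

lemma tanh_eq_coth_double: "y \<noteq> 0 \<Longrightarrow> tanh y = 2 * coth (2 * y) - coth y"
proof -
  assume y: "y \<noteq> 0"
  have s: "sinh y \<noteq> 0" using y by simp
  have c: "cosh y \<noteq> 0" by (metis cosh_real_pos less_irrefl)
  have "coth (2 * y) = (cosh y ^ 2 + sinh y ^ 2) / (2 * sinh y * cosh y)"
    unfolding coth_def by (simp add: cosh_double sinh_double)
  thus ?thesis using s c unfolding coth_def tanh_def
    by (simp add: field_simps power2_eq_square)
qed

lemma inverse_exp_plus_one: "y > 0 \<Longrightarrow> 1 / (exp (2 * y) + 1) = coth y / 2 - coth (2 * y) + 1 / 2"
proof -
  assume y: "y > 0"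
  define a where "a = exp (2 * y)"
  have a: "a > 1" using y by (simp add: a_def)
  have a2: "exp (2 * (2 * y)) = a * a" by (simp add: a_def exp_add[symmetric])
  have "coth y / 2 - coth (2 * y) + 1 / 2 = (1 + 2 / (a - 1)) / 2 - (1 + 2 / (a * a - 1)) + 1 / 2"
  proof -
    have y2: "2 * y > 0" using y by simp
    show ?thesis unfolding coth_exp[OF y] coth_exp[OF y2] a2 a_def ..
  qed
  also have "\<dots> = 1 / (a + 1)"
  proof -
    have "a - 1 \<noteq> 0" "a * a - 1 \<noteq> 0" "a + 1 \<noteq> 0" using a less_1_mult[OF a a] by auto
    moreover have "a * a - 1 = (a - 1) * (a + 1)" by (simp add: algebra_simps)
    ultimately show ?thesis by (simp add: divide_simps) (simp add: algebra_simps)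
  qed
  finally show ?thesis by (simp add: a_def)
qed

text \<open>The series \<open>C(t) = \<Sum>\<^sub>n coth(tn)/n\<^sup>5\<close>; its term at \<open>n = 0\<close> is \<open>0\<close>.\<close>
definition coth_term :: "real \<Rightarrow> nat \<Rightarrow> real" where
  "coth_term t n = coth (t * real n) / real n ^ 5"

definition coth_series :: "real \<Rightarrow> real" where
  "coth_series t = (\<Sum>n. coth_term t n)"

text \<open>For \<open>t > 0\<close> the series converges, since \<open>0 \<le> coth(tn) \<le> coth t\<close> for \<open>n \<ge> 1\<close>.\<close>
lemma coth_term_sums:
  assumes t: "t > 0"
  shows "coth_term t sums coth_series t"
proof -
  have bound: "norm (coth_term t n) \<le> coth t * inverse (real n ^ 5)" for n
  proof (cases "n = 0")
    case False
    have tn: "t * real n > 0" using t False by simp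
    have "1 < exp (2 * t)" using t by simp
    moreover have "exp (2 * t) \<le> exp (2 * (t * real n))" using t False by simp
    ultimately have "2 / (exp (2 * (t * real n)) - 1) \<le> 2 / (exp (2 * t) - 1)"
      by (intro divide_left_mono) auto
    moreover have "0 < 2 / (exp (2 * (t * real n)) - 1)" using tn by simp
    ultimately have "0 \<le> coth (t * real n) \<and> coth (t * real n) \<le> coth t"
      unfolding coth_exp[OF t] coth_exp[OF tn] by simp
    thus ?thesis by (simp add: coth_term_def divide_inverse mult_right_mono)
  qed (simp add: coth_term_def)
  have majorant: "summable (\<lambda>n. coth t * inverse (real n ^ 5))"
    by (intro summable_mult inverse_power_summable) simp
  have "summable (coth_term t)" by (rule summable_comparison_test'[OF majorant, where N = 0]) (rule bound)
  thus ?thesis unfolding coth_series_def by (rule summable_sums)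
qed

lemma coth_term_Suc_sums: "t > 0 \<Longrightarrow> (\<lambda>k. coth_term t (Suc k)) sums coth_series t"
  using coth_term_sums sums_Suc_iff[of "coth_term t"] by (simp add: coth_term_def)

lemma coth_term_double: "coth_term t (2 * n) = coth_term (2 * t) n / 32"
  unfolding coth_term_def by (simp add: power_mult_distrib mult_ac)

lemma sums_even_part:
  fixes h :: "nat \<Rightarrow> real"
  assumes "(\<lambda>j. h (2 * j)) sums e"
  shows "(\<lambda>n. if even n then h n else 0) sums e"
proof -
  have "(\<lambda>j. (\<lambda>n. if even n then h n else 0) (2 * j)) sums e" using assms by simp
  thus ?thesis
    by (subst (asm) sums_mono_reindex[of "\<lambda>j. 2 * j"]) (auto simp: strict_mono_def elim!: evenE)
qed

text \<open>
  The series \<open>\<Sum> parity_coth n / n\<^sup>5\<close> in terms of \<open>coth_series\<close> at \<open>\<pi>/2, \<pi>, 2\<pi>\<close>: for odd \<open>n\<close> use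
  \<open>tanh y = 2 coth 2y - coth y\<close>, and correct the even terms, whose sum is again a \<open>coth_series\<close>.
\<close>
lemma parity_coth_sums:
  "(\<lambda>k. parity_coth (Suc k) / real (Suc k) ^ 5) sums
     (33/16 * coth_series pi - coth_series (2 * pi) / 16 - coth_series (pi / 2))"
proof -
  define e where "e n = 2 * coth_term (pi / 2) n - 2 * coth_term pi n" for n
  have term_split: "parity_coth n / real n ^ 5 =
      2 * coth_term pi n - coth_term (pi / 2) n + (if even n then e n else 0)" for n
  proof (cases "even n")
    case True
    have "pi * real n / 2 = pi / 2 * real n" by simp
    thus ?thesis using True by (simp add: parity_coth_def coth_term_def e_def)
  next
    case False
    hence "pi * real n / 2 \<noteq> 0" using odd_pos by fastforce
    from tanh_eq_coth_double[OF this] have "parity_coth n = 2 * coth (pi * real n) - coth (pi / 2 * real n)"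
      using False by (simp add: parity_coth_def)
    thus ?thesis using False by (simp add: coth_term_def diff_divide_distrib)
  qed
  have half: "coth_term (pi / 2) sums coth_series (pi / 2)"
    and one: "coth_term pi sums coth_series pi"
    and two: "coth_term (2 * pi) sums coth_series (2 * pi)"
    by (simp_all add: coth_term_sums)
  have "(\<lambda>j. e (2 * j)) sums (2 * (coth_series pi / 32) - 2 * (coth_series (2 * pi) / 32))"
    unfolding e_def coth_term_double by (intro sums_diff sums_mult sums_divide) (simp_all add: one two)
  hence "(\<lambda>n. 2 * coth_term pi n - coth_term (pi / 2) n + (if even n then e n else 0)) sums
      (2 * coth_series pi - coth_series (pi / 2) + (2 * (coth_series pi / 32) - 2 * (coth_series (2 * pi) / 32)))"
    by (intro sums_add sums_diff sums_mult sums_even_part half one)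
  hence "(\<lambda>n. parity_coth n / real n ^ 5) sums
      (33/16 * coth_series pi - coth_series (2 * pi) / 16 - coth_series (pi / 2))"
    unfolding term_split[symmetric] by (simp add: algebra_simps)
  thus ?thesis using sums_Suc_iff[of "\<lambda>n. parity_coth n / real n ^ 5"] by simp
qed

lemma nonneg_double_series_swap:
  fixes f :: "nat \<Rightarrow> nat \<Rightarrow> real"
  assumes nonneg: "\<And>k l. f k l \<ge> 0"
    and rows: "\<And>k. f k sums r k" and cols: "\<And>l. (\<lambda>k. f k l) sums c l"
    and total: "r sums s"
  shows "c sums s"
proof -
  have r_nonneg: "r k \<ge> 0" for k using rows[of k] nonneg by (metis sums_iff suminf_nonneg)
  have c_nonneg: "c l \<ge> 0" for l using cols[of l] nonneg by (metis sums_iff suminf_nonneg)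
  have row_has_sum: "(f k has_sum r k) UNIV" for k by (rule sums_nonneg_imp_has_sum[OF rows nonneg])
  have col_has_sum: "((\<lambda>k. f k l) has_sum c l) UNIV" for l
    by (rule sums_nonneg_imp_has_sum[OF cols]) (rule nonneg)
  have r_has_sum: "(r has_sum s) UNIV" by (rule sums_nonneg_imp_has_sum[OF total r_nonneg])
  have "r summable_on UNIV" using r_has_sum by (auto simp: summable_on_def)
  hence "(\<lambda>(k, l). f k l) summable_on Sigma UNIV (\<lambda>_. UNIV)"
    by (intro summable_on_SigmaI[where g = r]) (use row_has_sum nonneg in auto)
  hence S: "(\<lambda>(k, l). f k l) summable_on (UNIV \<times> UNIV)" by simp
  have "infsum (\<lambda>k. infsum (\<lambda>l. f k l) UNIV) UNIV = infsum (\<lambda>l. infsum (\<lambda>k. f k l) UNIV) UNIV"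
    by (rule infsum_swap_banach[OF S])
  moreover have "infsum (f k) UNIV = r k" for k using row_has_sum by (rule infsumI)
  moreover have "infsum (\<lambda>k. f k l) UNIV = c l" for l using col_has_sum by (rule infsumI)
  ultimately have swapped: "infsum c UNIV = s" using infsumI[OF r_has_sum] by simp
  have "(\<lambda>(l, k). f k l) summable_on (UNIV \<times> UNIV)"
    using S summable_on_swap[of "\<lambda>(k, l). f k l" UNIV UNIV] by (simp only: case_prod_unfold fst_conv snd_conv)
  hence "(\<lambda>l. infsum (\<lambda>k. f k l) UNIV) summable_on UNIV"
    using summable_on_SigmaD[of "\<lambda>(l, k). f k l" UNIV "\<lambda>_. UNIV"] col_has_sum
    by (auto simp: summable_on_def)
  moreover have "(\<lambda>l. infsum (\<lambda>k. f k l) UNIV) = c" using col_has_sum by (intro ext infsumI)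
  ultimately have "summable c" by (simp add: summable_on_imp_summable)
  moreover have "infsum c UNIV = suminf c"
    using sums_nonneg_imp_has_sum[OF summable_sums[OF \<open>summable c\<close>] c_nonneg] by (simp add: infsumI)
  ultimately show ?thesis using swapped by (metis summable_sums)
qed

text \<open>
  The first double series \<open>\<Sum>\<^sub>n\<^sub>,\<^sub>m 1/(n\<^sup>2(n\<^sup>4+4m\<^sup>4))\<close>, indexed from \<open>0\<close> as \<open>n = k+1\<close>, \<open>m = l+1\<close>.
  Summing over \<open>m\<close> first gives the \<open>parity_coth\<close> series, summing over \<open>n\<close> first gives \<open>C(\<pi>)\<close>.
\<close>
definition quartic_double_term :: "nat \<Rightarrow> nat \<Rightarrow> real" where
  "quartic_double_term k l = 1 / ((real (Suc k))\<^sup>2 * ((real (Suc k))^4 + 4 * (real (Suc l))^4))"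

lemma quartic_double_term_rows:
  "quartic_double_term k sums (pi / 4 * (parity_coth (Suc k) / real (Suc k) ^ 5) - 1/2 * (1 / (real (Suc k))^6))"
proof -
  define N where "N = real (Suc k)"
  have N: "N > 0" by (simp add: N_def)
  have "(\<lambda>l. 1 / (N^4 + 4 * (real (Suc l))^4) * (1 / N\<^sup>2)) sums
      ((pi * N * parity_coth (Suc k) - 2) / (4 * N^4) * (1 / N\<^sup>2))"
    unfolding N_def by (intro sums_mult2 inverse_quartic_sums) simp
  moreover have "(\<lambda>l. 1 / (N^4 + 4 * (real (Suc l))^4) * (1 / N\<^sup>2)) = quartic_double_term k"
    by (auto simp: quartic_double_term_def N_def)
  moreover have "(pi * N * parity_coth (Suc k) - 2) / (4 * N^4) * (1 / N\<^sup>2) =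
      pi / 4 * (parity_coth (Suc k) / N ^ 5) - 1/2 * (1 / N^6)"
    using N by (simp add: field_simps power2_eq_square eval_nat_numeral)
  ultimately show ?thesis by (simp add: N_def)
qed

lemma quartic_double_term_cols:
  "(\<lambda>k. quartic_double_term k l) sums (pi\<^sup>2 / 6 / 4 * (1 / (real (Suc l))^4) - pi / 16 * coth_term pi (Suc l))"
proof -
  define M where "M = real (Suc l)"
  have M: "M > 0" by (simp add: M_def)
  have "(\<lambda>k. (1 / (real (Suc k))\<^sup>2 - (real (Suc k))\<^sup>2 / ((real (Suc k))^4 + 4 * M^4)) / (4 * M^4)) sums
      ((pi\<^sup>2 / 6 - pi * coth (pi * M) / (4 * M)) / (4 * M^4))"
    unfolding M_def by (intro sums_divide sums_diff inverse_squares_Suc_sums square_over_quartic_sums) simp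
  moreover have "(1 / N\<^sup>2 - N\<^sup>2 / (N^4 + 4 * M^4)) / (4 * M^4) = 1 / (N\<^sup>2 * (N^4 + 4 * M^4))"
    if "N > 0" for N :: real
  proof -
    have "N^4 + 4 * M^4 > 0" using M that by (intro add_pos_pos) auto
    hence "1 / N\<^sup>2 - N\<^sup>2 / (N^4 + 4 * M^4) = ((N^4 + 4 * M^4) - N\<^sup>2 * N\<^sup>2) / (N\<^sup>2 * (N^4 + 4 * M^4))"
      using that by (simp add: diff_frac_eq)
    also have "(N^4 + 4 * M^4) - N\<^sup>2 * N\<^sup>2 = 4 * M^4" by (simp add: power2_eq_square power4_eq_xxxx)
    finally show ?thesis using M that by simp
  qed
  hence "(\<lambda>k. (1 / (real (Suc k))\<^sup>2 - (real (Suc k))\<^sup>2 / ((real (Suc k))^4 + 4 * M^4)) / (4 * M^4)) =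
      (\<lambda>k. quartic_double_term k l)"
    unfolding quartic_double_term_def M_def[symmetric] by (intro ext) simp
  moreover have "(pi\<^sup>2 / 6 - pi * coth (pi * M) / (4 * M)) / (4 * M^4) =
      pi\<^sup>2 / 6 / 4 * (1 / M^4) - pi / 16 * coth_term pi (Suc l)"
    unfolding coth_term_def M_def[symmetric] using M by (simp add: field_simps eval_nat_numeral)
  ultimately show ?thesis by (simp add: M_def)
qed

lemma quartic_double_series_identity:
  "pi / 4 * (33/16 * coth_series pi - coth_series (2 * pi) / 16 - coth_series (pi / 2)) - 1/2 * (pi^6 / 945)
     = pi\<^sup>2 / 6 / 4 * (pi^4 / 90) - pi / 16 * coth_series pi"
proof -
  have "(\<lambda>k. pi / 4 * (parity_coth (Suc k) / real (Suc k) ^ 5) - 1/2 * (1 / (real (Suc k))^6)) sums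
      (pi / 4 * (33/16 * coth_series pi - coth_series (2 * pi) / 16 - coth_series (pi / 2)) - 1/2 * (pi^6 / 945))"
    by (intro sums_diff sums_mult parity_coth_sums inverse_sixth_powers_sums)
  from nonneg_double_series_swap[OF _ quartic_double_term_rows quartic_double_term_cols this]
  have "(\<lambda>l. pi\<^sup>2 / 6 / 4 * (1 / (real (Suc l))^4) - pi / 16 * coth_term pi (Suc l)) sums
      (pi / 4 * (33/16 * coth_series pi - coth_series (2 * pi) / 16 - coth_series (pi / 2)) - 1/2 * (pi^6 / 945))"
    by (simp add: quartic_double_term_def)
  moreover have "(\<lambda>l. pi\<^sup>2 / 6 / 4 * (1 / (real (Suc l))^4) - pi / 16 * coth_term pi (Suc l)) sums
      (pi\<^sup>2 / 6 / 4 * (pi^4 / 90) - pi / 16 * coth_series pi)"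
    by (intro sums_diff sums_mult inverse_fourth_powers_sums coth_term_Suc_sums) simp
  ultimately show ?thesis by (rule sums_unique2)
qed

text \<open>
  The second double series \<open>\<Sum>\<^sub>n\<^sub>,\<^sub>m 1/(n\<^sup>4(n\<^sup>2+4m\<^sup>2))\<close>. Summing over \<open>m\<close> first gives \<open>C(\<pi>/2)\<close>;
  summing over \<open>n\<close> first (after partial fractions in \<open>n\<^sup>2\<close>) gives \<open>C(2\<pi>)\<close> and zeta values.
\<close>
definition sextic_double_term :: "nat \<Rightarrow> nat \<Rightarrow> real" where
  "sextic_double_term k l = 1 / ((real (Suc k))^4 * ((real (Suc k))\<^sup>2 + 4 * (real (Suc l))\<^sup>2))"

lemma sextic_double_term_rows:
  "sextic_double_term k sums (pi / 4 * coth_term (pi / 2) (Suc k) - 1/2 * (1 / (real (Suc k))^6))"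
proof -
  define N where "N = real (Suc k)"
  have N: "N > 0" by (simp add: N_def)
  have "(\<lambda>l. 1 / ((real (Suc l))\<^sup>2 + (N / 2)\<^sup>2) / 4 * (1 / N^4)) sums
      ((pi * (N / 2) * coth (pi * (N / 2)) - 1) / (2 * (N / 2)\<^sup>2) / 4 * (1 / N^4))"
    by (intro sums_mult2 sums_divide inverse_square_plus_sums) (use N in simp)
  moreover have "(\<lambda>l. 1 / ((real (Suc l))\<^sup>2 + (N / 2)\<^sup>2) / 4 * (1 / N^4)) = sextic_double_term k"
  proof
    fix l
    have "(real (Suc l))\<^sup>2 + (N / 2)\<^sup>2 = (N\<^sup>2 + 4 * (real (Suc l))\<^sup>2) / 4"
      by (simp add: power_divide field_simps)
    thus "1 / ((real (Suc l))\<^sup>2 + (N / 2)\<^sup>2) / 4 * (1 / N^4) = sextic_double_term k l"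
      unfolding sextic_double_term_def N_def[symmetric] by simp
  qed
  moreover have "pi * (N / 2) = pi / 2 * N" by simp
  hence "(pi * (N / 2) * coth (pi * (N / 2)) - 1) / (2 * (N / 2)\<^sup>2) / 4 * (1 / N^4) =
      pi / 4 * coth_term (pi / 2) (Suc k) - 1/2 * (1 / N^6)"
    unfolding coth_term_def N_def[symmetric] using N
    by (simp add: field_simps power2_eq_square eval_nat_numeral)
  ultimately show ?thesis by (simp add: N_def)
qed

lemma sextic_double_term_cols:
  "(\<lambda>k. sextic_double_term k l) sums
     (pi^4 / 90 / 4 * (1 / (real (Suc l))\<^sup>2) - pi\<^sup>2 / 6 / 16 * (1 / (real (Suc l))^4)
      + pi / 64 * coth_term (2 * pi) (Suc l) - 1/128 * (1 / (real (Suc l))^6))"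
proof -
  define M where "M = real (Suc l)"
  have M: "M > 0" by (simp add: M_def)
  have "(\<lambda>k. 1 / (real (Suc k))^4 / (4 * M\<^sup>2) - 1 / (real (Suc k))\<^sup>2 / (16 * M^4)
        + 1 / ((real (Suc k))\<^sup>2 + (2 * M)\<^sup>2) / (16 * M^4)) sums
      ((pi^4 / 90) / (4 * M\<^sup>2) - (pi\<^sup>2 / 6) / (16 * M^4)
        + (pi * (2 * M) * coth (pi * (2 * M)) - 1) / (2 * (2 * M)\<^sup>2) / (16 * M^4))"
    by (intro sums_add sums_diff sums_divide inverse_fourth_powers_sums inverse_squares_Suc_sums
          inverse_square_plus_sums) (use M in simp)
  moreover have "1 / N^4 / (4 * M\<^sup>2) - 1 / N\<^sup>2 / (16 * M^4) + 1 / (N\<^sup>2 + (2 * M)\<^sup>2) / (16 * M^4)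
      = 1 / (N^4 * (N\<^sup>2 + 4 * M\<^sup>2))" if "N > 0" for N :: real
  proof -
    have "N\<^sup>2 + 4 * M\<^sup>2 > 0" using M that by (intro add_pos_pos) auto
    moreover have "(2 * M)\<^sup>2 = 4 * M\<^sup>2" by (simp add: power_mult_distrib)
    ultimately show ?thesis using that M
      by (simp add: divide_simps) (simp add: algebra_simps eval_nat_numeral)
  qed
  hence "(\<lambda>k. 1 / (real (Suc k))^4 / (4 * M\<^sup>2) - 1 / (real (Suc k))\<^sup>2 / (16 * M^4)
        + 1 / ((real (Suc k))\<^sup>2 + (2 * M)\<^sup>2) / (16 * M^4)) = (\<lambda>k. sextic_double_term k l)"
    unfolding sextic_double_term_def M_def[symmetric] by (intro ext) simp
  moreover have "pi * (2 * M) = 2 * pi * M" by simp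
  hence "(pi^4 / 90) / (4 * M\<^sup>2) - (pi\<^sup>2 / 6) / (16 * M^4)
        + (pi * (2 * M) * coth (pi * (2 * M)) - 1) / (2 * (2 * M)\<^sup>2) / (16 * M^4) =
      pi^4 / 90 / 4 * (1 / M\<^sup>2) - pi\<^sup>2 / 6 / 16 * (1 / M^4)
        + pi / 64 * coth_term (2 * pi) (Suc l) - 1/128 * (1 / M^6)"
    unfolding coth_term_def M_def[symmetric] using M by (simp add: field_simps eval_nat_numeral)
  ultimately show ?thesis by (simp add: M_def add_diff_eq)
qed

lemma sextic_double_series_identity:
  "pi / 4 * coth_series (pi / 2) - 1/2 * (pi^6 / 945) =
     pi^4 / 90 / 4 * (pi\<^sup>2 / 6) - pi\<^sup>2 / 6 / 16 * (pi^4 / 90) + pi / 64 * coth_series (2 * pi) - 1/128 * (pi^6 / 945)"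
proof -
  have "(\<lambda>k. pi / 4 * coth_term (pi / 2) (Suc k) - 1/2 * (1 / (real (Suc k))^6)) sums
      (pi / 4 * coth_series (pi / 2) - 1/2 * (pi^6 / 945))"
    by (intro sums_diff sums_mult coth_term_Suc_sums inverse_sixth_powers_sums) simp
  from nonneg_double_series_swap[OF _ sextic_double_term_rows sextic_double_term_cols this]
  have "(\<lambda>l. pi^4 / 90 / 4 * (1 / (real (Suc l))\<^sup>2) - pi\<^sup>2 / 6 / 16 * (1 / (real (Suc l))^4)
      + pi / 64 * coth_term (2 * pi) (Suc l) - 1/128 * (1 / (real (Suc l))^6)) sums
      (pi / 4 * coth_series (pi / 2) - 1/2 * (pi^6 / 945))"
    by (simp add: sextic_double_term_def)
  moreover have "(\<lambda>l. pi^4 / 90 / 4 * (1 / (real (Suc l))\<^sup>2) - pi\<^sup>2 / 6 / 16 * (1 / (real (Suc l))^4)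
      + pi / 64 * coth_term (2 * pi) (Suc l) - 1/128 * (1 / (real (Suc l))^6)) sums
      (pi^4 / 90 / 4 * (pi\<^sup>2 / 6) - pi\<^sup>2 / 6 / 16 * (pi^4 / 90) + pi / 64 * coth_series (2 * pi) - 1/128 * (pi^6 / 945))"
    by (intro sums_diff sums_add sums_mult inverse_squares_Suc_sums inverse_fourth_powers_sums
          inverse_sixth_powers_sums coth_term_Suc_sums) simp
  ultimately show ?thesis by (rule sums_unique2)
qed

text \<open>Eliminating \<open>coth_series (\<pi>/2)\<close> between the two double-series identities.\<close>
theorem coth_series_relation: "37 * coth_series pi - 2 * coth_series (2 * pi) = 5 * pi^5 / 42"
proof -
  have "pi * (37 * coth_series pi - 2 * coth_series (2 * pi)) = pi * (5 * pi^5 / 42)"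
    using quartic_double_series_identity sextic_double_series_identity
    by (simp add: algebra_simps eval_nat_numeral)
  thus ?thesis by simp
qed

text \<open>The two Lambert-type series of the theorem, through \<open>coth y = 1 + 2/(e\<^sup>2\<^sup>y - 1)\<close>.\<close>
lemma exp_minus_one_series_sums:
  "(\<lambda>n. 1 / ((real (Suc n)) ^ 5 * (exp (2 * pi * real (Suc n)) - 1))) sums
     (coth_series pi / 2 - (\<Sum>n. 1 / (real (Suc n)) ^ 5) / 2)"
proof -
  have "(\<lambda>n. coth_term pi (Suc n) / 2 - 1 / (real (Suc n)) ^ 5 / 2) sums
      (coth_series pi / 2 - (\<Sum>n. 1 / (real (Suc n)) ^ 5) / 2)"
    by (intro sums_diff sums_divide coth_term_Suc_sums summable_sums summable_inverse_power_Suc) simp_all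
  moreover have "coth_term pi (Suc m) / 2 - 1 / real (Suc m) ^ 5 / 2 =
      1 / (real (Suc m) ^ 5 * (exp (2 * pi * real (Suc m)) - 1))" for m
  proof -
    define n where "n = Suc m"
    have "pi * real n > 0" by (simp add: n_def)
    from coth_exp[OF this] have coth_minus_one: "coth (pi * real n) - 1 = 2 / (exp (2 * pi * real n) - 1)"
      by (simp add: mult.assoc)
    have "coth_term pi n / 2 - 1 / real n ^ 5 / 2 = (coth (pi * real n) - 1) / real n ^ 5 / 2"
      by (simp add: coth_term_def diff_divide_distrib)
    also have "\<dots> = 2 / (exp (2 * pi * real n) - 1) / real n ^ 5 / 2" by (simp only: coth_minus_one)
    finally show ?thesis unfolding n_def by simp
  qed
  ultimately show ?thesis by (simp only:)
qed

lemma exp_plus_one_series_sums: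
  "(\<lambda>n. 1 / ((real (Suc n)) ^ 5 * (exp (2 * pi * real (Suc n)) + 1))) sums
     (coth_series pi / 2 - coth_series (2 * pi) + (\<Sum>n. 1 / (real (Suc n)) ^ 5) / 2)"
proof -
  have "(\<lambda>n. coth_term pi (Suc n) / 2 - coth_term (2 * pi) (Suc n) + 1 / (real (Suc n)) ^ 5 / 2) sums
      (coth_series pi / 2 - coth_series (2 * pi) + (\<Sum>n. 1 / (real (Suc n)) ^ 5) / 2)"
    by (intro sums_add sums_diff sums_divide coth_term_Suc_sums summable_sums summable_inverse_power_Suc)
      simp_all
  moreover have "coth_term pi (Suc m) / 2 - coth_term (2 * pi) (Suc m) + 1 / real (Suc m) ^ 5 / 2 =
      1 / (real (Suc m) ^ 5 * (exp (2 * pi * real (Suc m)) + 1))" for m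
  proof -
    define n where "n = Suc m"
    have "pi * real n > 0" by (simp add: n_def)
    from inverse_exp_plus_one[OF this]
    have "1 / (exp (2 * pi * real n) + 1) = coth (pi * real n) / 2 - coth (2 * pi * real n) + 1 / 2"
      by (simp add: mult.assoc)
    hence "1 / (real n ^ 5 * (exp (2 * pi * real n) + 1)) =
        (coth (pi * real n) / 2 - coth (2 * pi * real n) + 1 / 2) / real n ^ 5"
      by (metis divide_divide_eq_left mult.commute)
    thus ?thesis unfolding n_def by (simp add: coth_term_def add_divide_distrib diff_divide_distrib)
  qed
  ultimately show ?thesis by (simp only:)
qed

theorem mainTheorem2:
  shows "(\<Sum>n. 1 / (real (Suc n)) ^ 5) =
    pi ^ 5 / 294
    - 72 / 35 * (\<Sum>n. 1 / ((real (Suc n)) ^ 5 * (exp (2 * pi * real (Suc n)) - 1)))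
    - 2 / 35 * (\<Sum>n. 1 / ((real (Suc n)) ^ 5 * (exp (2 * pi * real (Suc n)) + 1)))"
  unfolding sums_unique[OF exp_minus_one_series_sums, symmetric]
    sums_unique[OF exp_plus_one_series_sums, symmetric]
  using coth_series_relation by (simp add: field_simps)

end
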